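(* Let $pu$, $uv$, and $vq$ be three edges of a Euclidean minimum spanning tree of a finite point set in the plane such that $p$ and $q$ lie on the same side of the line through $u$ and $v$. Let $\alpha=\angle puv$ and $\gamma=\angle uvq$ denote the convex angles at $u$ and $v$, respectively. Then $\alpha+\gamma\geqslant 150^\circ$.
   Context: Angles are measured in degrees. *)

theory Defs
  imports "HOL-Analysis.Analysis"
begin

type_synonym point = "real ^ 2"

definition vangle_deg :: "point \<Rightarrow> point \<Rightarrow> real" where
  "vangle_deg x y = arccos ((x \<bullet> y) / (norm x * norm y)) * 180 / pi"

definition angle_deg :: "point \<Rightarrow> point \<Rightarrow> point \<Rightarrow> real" where
  "angle_deg a b c = vangle_deg (a - b) (c - b)"

definition orient :: "point \<Rightarrow> point \<Rightarrow> point \<Rightarrow> real" where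
  "orient a b c = (b$1 - a$1) * (c$2 - a$2) - (b$2 - a$2) * (c$1 - a$1)"

definition same_side :: "point \<Rightarrow> point \<Rightarrow> point \<Rightarrow> point \<Rightarrow> bool" where
  "same_side u v p q \<longleftrightarrow> orient u v p * orient u v q > 0"

definition edge_rel :: "point set set \<Rightarrow> (point \<times> point) set" where
  "edge_rel T = {(a, b). {a, b} \<in> T}"

definition is_spanning_tree :: "point set \<Rightarrow> point set set \<Rightarrow> bool" where
  "is_spanning_tree P T \<longleftrightarrow>
     T \<subseteq> {{a, b} | a b. a \<in> P \<and> b \<in> P \<and> a \<noteq> b} \<and>
     (\<forall>a\<in>P. \<forall>b\<in>P. (a, b) \<in> (edge_rel T)\<^sup>*) \<and>
     card T = card P - 1"

definition tree_length :: "point set set \<Rightarrow> real" where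
  "tree_length T = (\<Sum>e\<in>T. (THE d. \<exists>a b. e = {a, b} \<and> d = dist a b))"

definition is_EMST :: "point set \<Rightarrow> point set set \<Rightarrow> bool" where
  "is_EMST P T \<longleftrightarrow> is_spanning_tree P T \<and>
     (\<forall>T'. is_spanning_tree P T' \<longrightarrow> tree_length T \<le> tree_length T')"

end

theory Submission
  imports Defs
begin

(* Deleting an edge of a minimum spanning tree splits it into two components, and no segment
   joining them is shorter than the deleted edge. For the path p-u-v-q this makes |pv| the
   longest side of triangle puv, |uq| the longest side of triangle uvq, and |pq| at least |pu|,
   |uv| and |vq|. The first two facts give alpha, gamma >= 60 degrees. With a = |pu|, b = |uv|,
   c = |vq|, the same-side hypothesis gives
     |pq|^2 = a^2 + b^2 + c^2 - 2ab cos alpha - 2bc cos gamma + 2ac cos (alpha + gamma).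
   If alpha + gamma < 150 degrees and (by symmetry) c <= a, this monic quadratic in c is below
   a^2 + b^2 - ab <= max(a^2, b^2) at both ends of the interval [2b cos gamma, a], which
   contains c, hence also at c by convexity, contradicting |pq| >= max(a, b). *)

(* The radian counterpart of vangle_deg; it is pi/2 when x = 0 or y = 0. *)
definition vangle :: "'a::real_inner \<Rightarrow> 'a \<Rightarrow> real" where
  "vangle x y = arccos (x \<bullet> y / (norm x * norm y))"

lemma inner_div_norm_mult_bounds:
  "- 1 \<le> x \<bullet> y / (norm x * norm y)" "x \<bullet> y / (norm x * norm y) \<le> 1"
proof -
  have "\<bar>x \<bullet> y / (norm x * norm y)\<bar> \<le> 1"
    by (cases "x = 0 \<or> y = 0") (auto simp: abs_mult Cauchy_Schwarz_ineq2)
  then show "- 1 \<le> x \<bullet> y / (norm x * norm y)" "x \<bullet> y / (norm x * norm y) \<le> 1"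
    by (simp_all only: abs_le_iff) linarith+
qed

lemma cos_vangle: "cos (vangle x y) = x \<bullet> y / (norm x * norm y)"
  unfolding vangle_def using inner_div_norm_mult_bounds by (rule cos_arccos)

lemma norm_mult_cos_vangle: "norm x * norm y * cos (vangle x y) = x \<bullet> y"
  by (cases "x = 0 \<or> y = 0") (auto simp: cos_vangle)

lemma vangle_nonneg: "0 \<le> vangle x y"
  unfolding vangle_def using inner_div_norm_mult_bounds by (rule arccos_lbound)

lemma norm_diff_sq_cos_vangle:
  "(norm (x - y))\<^sup>2 = (norm x)\<^sup>2 + (norm y)\<^sup>2 - 2 * norm x * norm y * cos (vangle x y)"
  using norm_mult_cos_vangle[of x y]
  by (simp add: power2_norm_eq_inner inner_diff inner_commute mult.assoc)

definition cross2 :: "real^2 \<Rightarrow> real^2 \<Rightarrow> real" where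
  "cross2 x y = x$1 * y$2 - x$2 * y$1"

lemma inner_real2: "x \<bullet> y = x$1 * y$1 + x$2 * y$2" for x y :: "real^2"
  by (simp add: inner_vec_def sum_2)

lemma inner_sq_add_cross2_sq: "(x \<bullet> y)\<^sup>2 + (cross2 x y)\<^sup>2 = (norm x)\<^sup>2 * (norm y)\<^sup>2"
  unfolding power2_norm_eq_inner by (simp add: inner_real2 cross2_def power2_eq_square algebra_simps)

lemma inner_mult_inner_add_cross2_mult:
  "(e \<bullet> x) * (e \<bullet> y) + cross2 e x * cross2 e y = (x \<bullet> y) * (norm e)\<^sup>2"
  by (simp add: power2_norm_eq_inner inner_real2 cross2_def algebra_simps)

lemma sin_vangle:
  fixes x y :: "real^2"
  assumes "x \<noteq> 0" "y \<noteq> 0"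
  shows "sin (vangle x y) = \<bar>cross2 x y\<bar> / (norm x * norm y)"
proof -
  have "1 - (x \<bullet> y / (norm x * norm y))\<^sup>2 = (\<bar>cross2 x y\<bar> / (norm x * norm y))\<^sup>2"
    using inner_sq_add_cross2_sq[of x y] assms
    by (simp add: field_simps)
  then show ?thesis
    by (simp add: vangle_def sin_arccos inner_div_norm_mult_bounds)
qed

(* For x and y on the same side of the line spanned by e, the angle between x and y is
   pi - (vangle x e + vangle (- e) y). *)
lemma inner_eq_neg_cos_vangle_add:
  fixes e x y :: "real^2"
  assumes sides: "0 < cross2 e x * cross2 e y"
  shows "x \<bullet> y = - (norm x * norm y * cos (vangle x e + vangle (- e) y))"
proof -
  have nonzero: "e \<noteq> 0" "x \<noteq> 0" "y \<noteq> 0"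
    using sides by (auto simp: cross2_def)
  have "\<bar>cross2 x e\<bar> * \<bar>cross2 (- e) y\<bar> = cross2 e x * cross2 e y"
    using sides by (simp add: cross2_def abs_mult[symmetric] algebra_simps)
  then have "norm x * norm y * cos (vangle x e + vangle (- e) y) * (norm e)\<^sup>2
             = - ((e \<bullet> x) * (e \<bullet> y) + cross2 e x * cross2 e y)"
    using nonzero
    by (simp add: cos_add cos_vangle sin_vangle inner_commute power2_eq_square field_simps)
  also have "\<dots> = - (x \<bullet> y) * (norm e)\<^sup>2"
    by (simp add: inner_mult_inner_add_cross2_mult)
  finally have
    "(x \<bullet> y + norm x * norm y * cos (vangle x e + vangle (- e) y)) * (norm e)\<^sup>2 = 0"
    by (simp add: algebra_simps)
  then show ?thesis
    using nonzero by (simp add: eq_neg_iff_add_eq_0)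
qed

lemma quadratic_le_max_endpoints:
  fixes B C s t x :: real
  assumes "x \<in> {s..t}"
  shows "x\<^sup>2 + B * x + C \<le> max (s\<^sup>2 + B * s + C) (t\<^sup>2 + B * t + C)"
proof -
  have "convex_on {s..t} (\<lambda>x. B * x + C)"
    by (rule convex_on_linorderI) (auto simp: algebra_simps)
  then have "convex_on {s..t} (\<lambda>x. x\<^sup>2 + (B * x + C))"
    using convex_on_add[OF convex_on_subset[OF convex_power2]] by auto
  then show ?thesis using convex_on_le_max[OF _ assms] by (simp add: add.assoc)
qed

lemma pi_div_3_le_angle_opposite_longest_side:
  fixes a b \<alpha> :: real
  assumes "0 < a" "0 < b" "0 \<le> \<alpha>"
    and longest: "(max a b)\<^sup>2 \<le> a\<^sup>2 + b\<^sup>2 - 2 * a * b * cos \<alpha>"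
  shows "pi / 3 \<le> \<alpha>"
proof (rule ccontr)
  assume "\<not> pi / 3 \<le> \<alpha>"
  then have "cos (pi / 3) < cos \<alpha>"
    using assms(3) by (intro cos_monotone_0_pi) auto
  then have "a * b < 2 * a * b * cos \<alpha>"
    using assms(1,2) by (simp add: cos_60)
  moreover have "a\<^sup>2 \<le> (max a b)\<^sup>2" "b\<^sup>2 \<le> (max a b)\<^sup>2"
    using assms(1,2) by (simp_all add: power_mono)
  ultimately have "a * b < b * b" "a * b < a * a"
    using longest by (simp_all add: power2_eq_square)
  then show False
    using assms(1,2) by simp
qed

lemma cos_add_cos_gt_half:
  fixes \<alpha> \<gamma> :: real
  assumes "pi / 3 \<le> \<alpha>" "pi / 3 \<le> \<gamma>" "\<alpha> + \<gamma> < 5 * pi / 6"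
  shows "1 / 2 < cos \<alpha> + cos \<gamma>"
proof -
  have "cos (5 * pi / 12) < cos ((\<alpha> + \<gamma>) / 2)"
    using assms by (intro cos_monotone_0_pi) auto
  moreover have "cos (pi / 12) \<le> cos ((\<alpha> - \<gamma>) / 2)"
  proof -
    have "\<bar>\<alpha> - \<gamma>\<bar> \<le> pi / 6"
      unfolding abs_le_iff using assms by (intro conjI; linarith)
    then have "cos (pi / 12) \<le> cos \<bar>(\<alpha> - \<gamma>) / 2\<bar>"
      by (intro cos_monotone_0_pi_le) auto
    then show ?thesis by (simp only: cos_abs_real)
  qed
  moreover have "0 < cos (5 * pi / 12)" "0 < cos (pi / 12)"
    by (simp_all add: cos_gt_zero)
  ultimately have
    "cos (5 * pi / 12) * cos (pi / 12) < cos ((\<alpha> + \<gamma>) / 2) * cos ((\<alpha> - \<gamma>) / 2)"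
    by (intro mult_less_le_imp_less) auto
  moreover have "cos (5 * pi / 12) * cos (pi / 12) = 1 / 4"
    by (simp add: cos_times_cos cos_60 field_simps)
  ultimately show ?thesis
    by (simp add: cos_plus_cos)
qed

lemma angle_sum_ge_5pi_div_6_if_le:
  fixes a b c \<alpha> \<gamma> :: real
  assumes pos: "0 < a" "0 < b" "0 < c" and "c \<le> a"
    and \<alpha>: "pi / 3 \<le> \<alpha>" and \<gamma>: "pi / 3 \<le> \<gamma>"
    and bc: "b\<^sup>2 \<le> b\<^sup>2 + c\<^sup>2 - 2 * b * c * cos \<gamma>"
    and diagonal: "(max a b)\<^sup>2 \<le> a\<^sup>2 + b\<^sup>2 + c\<^sup>2 - 2 * a * b * cos \<alpha> - 2 * b * c * cos \<gamma>
                                 + 2 * a * c * cos (\<alpha> + \<gamma>)"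
  shows "5 * pi / 6 \<le> \<alpha> + \<gamma>"
proof (rule ccontr)
  assume "\<not> ?thesis"
  then have sum: "\<alpha> + \<gamma> < 5 * pi / 6" by simp
  define f where
    "f t = t\<^sup>2 + (2 * a * cos (\<alpha> + \<gamma>) - 2 * b * cos \<gamma>) * t
           + (a\<^sup>2 + b\<^sup>2 - 2 * a * b * cos \<alpha>)" for t
  have "2 * b * cos \<gamma> * c \<le> c * c"
    using bc by (simp add: power2_eq_square mult_ac)
  then have left: "2 * b * cos \<gamma> \<le> c"
    using pos(3) by simp
  have "f (2 * b * cos \<gamma>) = a\<^sup>2 + b\<^sup>2 + 2 * a * b * (2 * cos \<gamma> * cos (\<alpha> + \<gamma>) - cos \<alpha>)"
    by (simp add: f_def power2_eq_square algebra_simps)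
  also have "2 * cos \<gamma> * cos (\<alpha> + \<gamma>) - cos \<alpha> = cos (\<alpha> + 2 * \<gamma>)"
    using cos_times_cos[of \<gamma> "\<alpha> + \<gamma>"] by (simp add: algebra_simps)
  also have "cos (\<alpha> + 2 * \<gamma>) < - 1 / 2"
  proof -
    have "cos (pi / 3) < cos (\<alpha> + 2 * \<gamma> - pi)"
      using \<alpha> \<gamma> sum by (intro cos_monotone_0_pi) auto
    then show ?thesis by (simp add: cos_60)
  qed
  finally have f_left: "f (2 * b * cos \<gamma>) < a\<^sup>2 + b\<^sup>2 - a * b"
    using pos by (simp add: mult_strict_left_mono)
  have "cos (\<alpha> + \<gamma>) \<le> cos (2 * pi / 3)"
    using \<alpha> \<gamma> sum by (intro cos_monotone_0_pi_le) auto
  then have "a\<^sup>2 * (2 * cos (\<alpha> + \<gamma>)) \<le> a\<^sup>2 * (- 1)"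
    by (intro mult_left_mono) (auto simp: cos_120)
  moreover have "a * b < 2 * a * b * (cos \<alpha> + cos \<gamma>)"
    using cos_add_cos_gt_half[OF \<alpha> \<gamma> sum] pos by simp
  ultimately have f_right: "f a < a\<^sup>2 + b\<^sup>2 - a * b"
    by (simp add: f_def power2_eq_square algebra_simps)
  have "f c \<le> max (f (2 * b * cos \<gamma>)) (f a)"
    unfolding f_def using left \<open>c \<le> a\<close> by (intro quadratic_le_max_endpoints) auto
  also have "\<dots> < a\<^sup>2 + b\<^sup>2 - a * b"
    using f_left f_right by simp
  also have "\<dots> \<le> (max a b)\<^sup>2"
    using pos by (auto simp: max_def power2_eq_square algebra_simps mult_right_mono)
  finally show False
    using diagonal by (simp add: f_def algebra_simps)
qed

lemma angle_sum_ge_5pi_div_6: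
  fixes a b c \<alpha> \<gamma> :: real
  assumes pos: "0 < a" "0 < b" "0 < c" and "0 \<le> \<alpha>" "0 \<le> \<gamma>"
    and ab: "(max a b)\<^sup>2 \<le> a\<^sup>2 + b\<^sup>2 - 2 * a * b * cos \<alpha>"
    and bc: "(max b c)\<^sup>2 \<le> b\<^sup>2 + c\<^sup>2 - 2 * b * c * cos \<gamma>"
    and diagonal: "(max (max a b) c)\<^sup>2 \<le> a\<^sup>2 + b\<^sup>2 + c\<^sup>2 - 2 * a * b * cos \<alpha>
                                 - 2 * b * c * cos \<gamma> + 2 * a * c * cos (\<alpha> + \<gamma>)"
  shows "5 * pi / 6 \<le> \<alpha> + \<gamma>"
proof -
  have \<alpha>: "pi / 3 \<le> \<alpha>"
    using pi_div_3_le_angle_opposite_longest_side[OF pos(1,2) \<open>0 \<le> \<alpha>\<close> ab] .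
  have \<gamma>: "pi / 3 \<le> \<gamma>"
    using pi_div_3_le_angle_opposite_longest_side[OF pos(2,3) \<open>0 \<le> \<gamma>\<close> bc] .
  have squares: "b\<^sup>2 \<le> (max b c)\<^sup>2" "b\<^sup>2 \<le> (max a b)\<^sup>2"
    "(max a b)\<^sup>2 \<le> (max (max a b) c)\<^sup>2" "(max c b)\<^sup>2 \<le> (max (max a b) c)\<^sup>2"
    using pos by (simp_all add: power_mono)
  show ?thesis
  proof (cases "c \<le> a")
    case True
    show ?thesis
    proof (rule angle_sum_ge_5pi_div_6_if_le[OF pos True \<alpha> \<gamma>])
      show "b\<^sup>2 \<le> b\<^sup>2 + c\<^sup>2 - 2 * b * c * cos \<gamma>"
        using squares(1) bc by linarith
      show "(max a b)\<^sup>2 \<le> a\<^sup>2 + b\<^sup>2 + c\<^sup>2 - 2 * a * b * cos \<alpha> - 2 * b * c * cos \<gamma>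
                         + 2 * a * c * cos (\<alpha> + \<gamma>)"
        using squares(3) diagonal by linarith
    qed
  next
    case False
    have "5 * pi / 6 \<le> \<gamma> + \<alpha>"
    proof (rule angle_sum_ge_5pi_div_6_if_le[OF pos(3,2,1) _ \<gamma> \<alpha>])
      show "a \<le> c"
        using False by simp
      show "b\<^sup>2 \<le> b\<^sup>2 + a\<^sup>2 - 2 * b * a * cos \<alpha>"
        using squares(2) ab by (simp add: mult.commute mult.left_commute)
      show "(max c b)\<^sup>2 \<le> c\<^sup>2 + b\<^sup>2 + a\<^sup>2 - 2 * c * b * cos \<gamma> - 2 * b * a * cos \<alpha>
                         + 2 * c * a * cos (\<gamma> + \<alpha>)"
        using squares(4) diagonal by (simp add: algebra_simps)
    qed
    then show ?thesis by simp
  qed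
qed

definition angle :: "point \<Rightarrow> point \<Rightarrow> point \<Rightarrow> real" where
  "angle a b c = vangle (a - b) (c - b)"

lemma angle_deg_eq: "angle_deg a b c = angle a b c * 180 / pi"
  by (simp add: angle_deg_def vangle_deg_def angle_def vangle_def)

lemma angle_nonneg: "0 \<le> angle a b c"
  by (simp add: angle_def vangle_nonneg)

lemma law_of_cosines:
  "(dist a c)\<^sup>2 = (dist a b)\<^sup>2 + (dist b c)\<^sup>2 - 2 * dist a b * dist b c * cos (angle a b c)"
  using norm_diff_sq_cos_vangle[of "a - b" "c - b"]
  by (simp add: angle_def dist_norm norm_minus_commute[of b c])

lemma dist_sq_across_same_side:
  assumes "same_side u v p q"
  shows "(dist p q)\<^sup>2 = (dist p u)\<^sup>2 + (dist u v)\<^sup>2 + (dist v q)\<^sup>2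
           - 2 * dist p u * dist u v * cos (angle p u v) - 2 * dist u v * dist v q * cos (angle u v q)
           + 2 * dist p u * dist v q * cos (angle p u v + angle u v q)"
proof -
  define x e y where "x = p - u" and "e = v - u" and "y = q - v"
  have "orient u v p = cross2 e x" "orient u v q = cross2 e y"
    by (simp_all add: orient_def cross2_def x_def e_def y_def algebra_simps)
  then have "0 < cross2 e x * cross2 e y"
    using assms by (simp add: same_side_def)
  moreover have angles: "angle p u v = vangle x e" "angle u v q = vangle (- e) y"
    by (simp_all add: angle_def x_def e_def y_def)
  ultimately have xy: "x \<bullet> y = - (norm x * norm y * cos (angle p u v + angle u v q))"
    by (simp add: inner_eq_neg_cos_vangle_add)
  have xe: "x \<bullet> e = norm x * norm e * cos (angle p u v)"
    by (simp add: norm_mult_cos_vangle angles)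
  have ey: "e \<bullet> y = - (norm e * norm y * cos (angle u v q))"
    using norm_mult_cos_vangle[of "- e" y] by (simp add: angles)
  have "p - q = x - e - y"
    by (simp add: x_def e_def y_def)
  then have "(dist p q)\<^sup>2
      = (norm x)\<^sup>2 + (norm e)\<^sup>2 + (norm y)\<^sup>2 - 2 * (x \<bullet> e) - 2 * (x \<bullet> y) + 2 * (e \<bullet> y)"
    by (simp add: dist_norm power2_norm_eq_inner inner_diff inner_commute)
  moreover have "norm x = dist p u" "norm e = dist u v" "norm y = dist v q"
    by (simp_all add: x_def e_def y_def dist_norm norm_minus_commute)
  ultimately show ?thesis
    unfolding xy xe ey by (simp add: algebra_simps)
qed

lemma angle_sum_ge_5pi_div_6_if_diagonals_longest:
  assumes "same_side u v p q"
    and pv: "max (dist p u) (dist u v) \<le> dist p v"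
    and uq: "max (dist u v) (dist v q) \<le> dist u q"
    and pq: "max (max (dist p u) (dist u v)) (dist v q) \<le> dist p q"
  shows "5 * pi / 6 \<le> angle p u v + angle u v q"
proof (rule angle_sum_ge_5pi_div_6)
  have "p \<noteq> u" "u \<noteq> v" "v \<noteq> q"
    using assms(1) by (auto simp: same_side_def orient_def)
  then show "0 < dist p u" "0 < dist u v" "0 < dist v q"
    by simp_all
  show "0 \<le> angle p u v" "0 \<le> angle u v q"
    by (rule angle_nonneg)+
  have squares: "(max (dist p u) (dist u v))\<^sup>2 \<le> (dist p v)\<^sup>2"
    "(max (dist u v) (dist v q))\<^sup>2 \<le> (dist u q)\<^sup>2"
    "(max (max (dist p u) (dist u v)) (dist v q))\<^sup>2 \<le> (dist p q)\<^sup>2"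
    using pv uq pq by (auto intro!: power_mono simp: le_max_iff_disj)
  show "(max (dist p u) (dist u v))\<^sup>2
          \<le> (dist p u)\<^sup>2 + (dist u v)\<^sup>2 - 2 * dist p u * dist u v * cos (angle p u v)"
    using squares(1) law_of_cosines[where a = p and b = u and c = v] by linarith
  show "(max (dist u v) (dist v q))\<^sup>2
          \<le> (dist u v)\<^sup>2 + (dist v q)\<^sup>2 - 2 * dist u v * dist v q * cos (angle u v q)"
    using squares(2) law_of_cosines[where a = u and b = v and c = q] by linarith
  show "(max (max (dist p u) (dist u v)) (dist v q))\<^sup>2
          \<le> (dist p u)\<^sup>2 + (dist u v)\<^sup>2 + (dist v q)\<^sup>2
          - 2 * dist p u * dist u v * cos (angle p u v) - 2 * dist u v * dist v q * cos (angle u v q)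
          + 2 * dist p u * dist v q * cos (angle p u v + angle u v q)"
    using squares(3) dist_sq_across_same_side[OF assms(1)] by linarith
qed

definition connects :: "point set set \<Rightarrow> point set \<Rightarrow> bool" where
  "connects T P \<longleftrightarrow> (\<forall>x\<in>P. \<forall>y\<in>P. (x, y) \<in> (edge_rel T)\<^sup>*)"

lemma edge_rel_iff [simp]: "(a, b) \<in> edge_rel T \<longleftrightarrow> {a, b} \<in> T"
  by (simp add: edge_rel_def)

lemma sym_rtrancl_edge_rel: "sym ((edge_rel T)\<^sup>*)"
  by (rule sym_rtrancl) (auto simp: sym_def insert_commute)

lemma is_spanning_tree_iff:
  "is_spanning_tree P T \<longleftrightarrow>
     T \<subseteq> {{a, b} | a b. a \<in> P \<and> b \<in> P \<and> a \<noteq> b} \<and> connects T P \<and> card T = card P - 1"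
  by (simp add: is_spanning_tree_def connects_def)

lemma spanning_tree_edgeD:
  assumes "is_spanning_tree P T" "{a, b} \<in> T"
  shows "a \<in> P" "b \<in> P" "a \<noteq> b"
  using assms by (auto simp: is_spanning_tree_def doubleton_eq_iff)

(* Each vertex x other than a root r is sent to an edge leading one step closer to r; the map is
   injective because the distance to r strictly decreases along each chosen edge. *)
lemma card_le_Suc_card_if_connects:
  assumes "finite T" "connects T P"
  shows "card P \<le> Suc (card T)"
proof (cases "P = {}")
  case False
  then obtain r where r: "r \<in> P" by blast
  let ?R = "edge_rel T"
  define d where "d x = (LEAST n. (x, r) \<in> ?R ^^ n)" for x
  have closer: "\<exists>y. {x, y} \<in> T \<and> d y < d x" if "x \<in> P" "x \<noteq> r" for x
  proof -
    from assms(2) that(1) r have "(x, r) \<in> ?R\<^sup>*"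
      by (simp add: connects_def)
    then obtain n where "(x, r) \<in> ?R ^^ n"
      using rtrancl_power by blast
    then have xr: "(x, r) \<in> ?R ^^ d x"
      unfolding d_def by (rule LeastI)
    with that(2) obtain m where m: "d x = Suc m"
      by (cases "d x") auto
    with xr obtain y where "(x, y) \<in> ?R" "(y, r) \<in> ?R ^^ m"
      using relpow_Suc_D2 by metis
    moreover from this(2) have "d y \<le> m"
      unfolding d_def by (rule Least_le)
    ultimately show ?thesis
      using m by auto
  qed
  define g where "g x = (SOME y. {x, y} \<in> T \<and> d y < d x)" for x
  have g: "{x, g x} \<in> T" "d (g x) < d x" if "x \<in> P - {r}" for x
    using someI_ex[OF closer] that unfolding g_def by blast+
  have "inj_on (\<lambda>x. {x, g x}) (P - {r})"
  proof (rule inj_onI)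
    fix x x' assume x: "x \<in> P - {r}" and x': "x' \<in> P - {r}" and eq: "{x, g x} = {x', g x'}"
    show "x = x'"
    proof (rule ccontr)
      assume "x \<noteq> x'"
      with eq have "x = g x'" "x' = g x"
        by (auto simp: doubleton_eq_iff)
      then have "d x < d x'" "d x' < d x"
        using g(2)[OF x'] g(2)[OF x] by simp_all
      then show False
        by simp
    qed
  qed
  then have "card (P - {r}) \<le> card T"
    using g(1) assms(1) by (intro card_inj_on_le) auto
  then show ?thesis
    using r by (simp add: card_Diff_singleton_if)
qed simp

lemma connects_replace_edge:
  assumes ab: "(a, b) \<in> (edge_rel S)\<^sup>*" and "T - {{a, b}} \<subseteq> S" "connects T P"
  shows "connects S P"
proof -
  have ba: "(b, a) \<in> (edge_rel S)\<^sup>*"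
    by (rule symD[OF sym_rtrancl_edge_rel ab])
  have "(s, t) \<in> (edge_rel S)\<^sup>*" if "{s, t} \<in> T" for s t
  proof (cases "{s, t} = {a, b}")
    case True
    then have "(s, t) = (a, b) \<or> (s, t) = (b, a)"
      by (auto simp: doubleton_eq_iff)
    then show ?thesis
      using ab ba by blast
  next
    case False
    then have "{s, t} \<in> S"
      using that assms(2) by blast
    then show ?thesis
      by (simp add: r_into_rtrancl)
  qed
  then have "edge_rel T \<subseteq> (edge_rel S)\<^sup>*"
    by (auto simp: edge_rel_def)
  then have "(edge_rel T)\<^sup>* \<subseteq> (edge_rel S)\<^sup>*"
    by (rule rtrancl_subset_rtrancl)
  then show ?thesis
    using assms(3) unfolding connects_def by blast
qed

lemma spanning_tree_finite:
  assumes "finite P" "is_spanning_tree P T"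
  shows "finite T"
proof -
  have "T \<subseteq> Pow P"
    using assms(2) by (auto simp: is_spanning_tree_def)
  then show ?thesis
    using assms(1) by (meson finite_Pow_iff finite_subset)
qed

lemma tree_length_insert:
  assumes "finite T" "{x, y} \<notin> T"
  shows "tree_length (insert {x, y} T) = dist x y + tree_length T"
proof -
  have "(THE d. \<exists>a b. {x, y} = {a, b} \<and> d = dist a b) = dist x y"
    by (rule the_equality) (auto simp: doubleton_eq_iff dist_commute)
  then show ?thesis
    using assms by (simp add: tree_length_def)
qed

lemma spanning_tree_exchange:
  assumes "finite P" "is_spanning_tree P T" "{a, b} \<in> T" "x \<in> P" "y \<in> P"
    and ax: "(a, x) \<in> (edge_rel (T - {{a, b}}))\<^sup>*" and "(b, y) \<in> (edge_rel (T - {{a, b}}))\<^sup>*"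
  shows "{x, y} \<notin> T - {{a, b}}" and "is_spanning_tree P (insert {x, y} (T - {{a, b}}))"
proof -
  define T0 where "T0 = T - {{a, b}}"
  have sub: "T \<subseteq> {{a, b} | a b. a \<in> P \<and> b \<in> P \<and> a \<noteq> b}" and "connects T P"
    and "card T = card P - 1"
    using assms(2) by (simp_all add: is_spanning_tree_iff)
  moreover have "finite T"
    using spanning_tree_finite[OF assms(1,2)] .
  ultimately have card_T0: "card T0 = card P - 2"
    using assms(3) by (simp add: T0_def)
  have "card {a, b} \<le> card P"
    using spanning_tree_edgeD[OF assms(2,3)] assms(1) by (intro card_mono) auto
  then have "2 \<le> card P"
    using spanning_tree_edgeD[OF assms(2,3)] by simp
  have yb: "(y, b) \<in> (edge_rel T0)\<^sup>*"
    unfolding T0_def by (rule symD[OF sym_rtrancl_edge_rel assms(7)])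
  have "(a, b) \<in> (edge_rel S)\<^sup>*" if "T0 \<subseteq> S" "(x, y) \<in> (edge_rel S)\<^sup>*" for S
  proof -
    have "(edge_rel T0)\<^sup>* \<subseteq> (edge_rel S)\<^sup>*"
      using that(1) by (intro rtrancl_mono) (auto simp: edge_rel_def)
    then show ?thesis
      using ax yb that(2) unfolding T0_def by (meson rtrancl_trans subsetD)
  qed
  note reconnect = connects_replace_edge[OF this _ \<open>connects T P\<close>]
  have new: "{x, y} \<notin> T0 \<and> x \<noteq> y"
  proof (rule ccontr)
    assume "\<not> ?thesis"
    then have "(x, y) \<in> (edge_rel T0)\<^sup>*"
      by auto
    then have "connects T0 P"
      by (intro reconnect) (auto simp: T0_def)
    then have "card P \<le> Suc (card T0)"
      using \<open>finite T\<close> by (intro card_le_Suc_card_if_connects) (auto simp: T0_def)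
    then show False
      using card_T0 \<open>2 \<le> card P\<close> by simp
  qed
  then show "{x, y} \<notin> T - {{a, b}}"
    by (simp add: T0_def)
  have "connects (insert {x, y} T0) P"
    by (intro reconnect) (auto simp: T0_def)
  moreover have "card (insert {x, y} T0) = card P - 1"
    using new card_T0 \<open>finite T\<close> \<open>2 \<le> card P\<close> by (simp add: T0_def)
  moreover have "insert {x, y} T0 \<subseteq> {{a, b} | a b. a \<in> P \<and> b \<in> P \<and> a \<noteq> b}"
    using sub new assms(4,5) by (auto simp: T0_def)
  ultimately show "is_spanning_tree P (insert {x, y} (T - {{a, b}}))"
    by (simp add: is_spanning_tree_iff T0_def)
qed

lemma EMST_edge_le_dist:
  assumes "finite P" "is_EMST P T" "{a, b} \<in> T" "x \<in> P" "y \<in> P"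
    and "(a, x) \<in> (edge_rel (T - {{a, b}}))\<^sup>*" "(b, y) \<in> (edge_rel (T - {{a, b}}))\<^sup>*"
  shows "dist a b \<le> dist x y"
proof -
  have tree: "is_spanning_tree P T"
    using assms(2) by (simp add: is_EMST_def)
  note exchange = spanning_tree_exchange[OF assms(1) tree assms(3-7)]
  have "finite (T - {{a, b}})"
    using spanning_tree_finite[OF assms(1) tree] by simp
  then have "dist a b + tree_length (T - {{a, b}}) = tree_length T"
    using tree_length_insert[of "T - {{a, b}}" a b] assms(3) by (simp add: insert_absorb)
  also have "\<dots> \<le> tree_length (insert {x, y} (T - {{a, b}}))"
    using assms(2) exchange(2) by (simp add: is_EMST_def)
  also have "\<dots> = dist x y + tree_length (T - {{a, b}})"
    using tree_length_insert[OF \<open>finite (T - {{a, b}})\<close> exchange(1)] .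
  finally show ?thesis
    by simp
qed

lemma EMST_path_dist_bounds:
  assumes "finite P" "is_EMST P T"
    and pu: "{p, u} \<in> T" and uv: "{u, v} \<in> T" and vq: "{v, q} \<in> T" and "p \<noteq> v" "q \<noteq> u"
  shows "max (dist p u) (dist u v) \<le> dist p v"
    and "max (dist u v) (dist v q) \<le> dist u q"
    and "max (max (dist p u) (dist u v)) (dist v q) \<le> dist p q"
proof -
  have tree: "is_spanning_tree P T"
    using assms(2) by (simp add: is_EMST_def)
  have in_P: "p \<in> P" "u \<in> P" "v \<in> P" "q \<in> P" and "u \<noteq> v"
    using spanning_tree_edgeD[OF tree pu] spanning_tree_edgeD[OF tree uv]
      spanning_tree_edgeD[OF tree vq]
    by simp_all
  define reach where "reach e = (edge_rel (T - {e}))\<^sup>*" for e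
  have edge: "(s, t) \<in> reach e" "(t, s) \<in> reach e" if "{s, t} \<in> T" "{s, t} \<noteq> e" for s t e
    using that by (auto simp: reach_def insert_commute)
  have le: "dist a b \<le> dist x y"
    if "{a, b} \<in> T" "x \<in> P" "y \<in> P" "(a, x) \<in> reach {a, b}" "(b, y) \<in> reach {a, b}" for a b x y
    using EMST_edge_le_dist[OF assms(1,2)] that by (simp add: reach_def)
  have up: "{u, p} \<in> T"
    using pu by (simp add: insert_commute)
  have "(u, v) \<in> reach {u, p}" "(v, q) \<in> reach {u, p}"
    using uv vq \<open>p \<noteq> v\<close> \<open>u \<noteq> v\<close> by (auto intro: edge simp: doubleton_eq_iff)
  then have "dist u p \<le> dist v p" "dist u p \<le> dist q p"
    using le[OF up] in_P by (auto simp: reach_def intro: rtrancl_trans)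
  moreover have "(u, p) \<in> reach {u, v}" "(v, q) \<in> reach {u, v}"
    using pu vq \<open>p \<noteq> v\<close> \<open>q \<noteq> u\<close> by (auto intro: edge simp: doubleton_eq_iff)
  then have "dist u v \<le> dist p v" "dist u v \<le> dist u q" "dist u v \<le> dist p q"
    using le[OF uv] in_P by (auto simp: reach_def)
  moreover have "(v, u) \<in> reach {v, q}" "(u, p) \<in> reach {v, q}"
    using uv pu \<open>q \<noteq> u\<close> \<open>u \<noteq> v\<close> by (auto intro: edge simp: doubleton_eq_iff)
  then have "dist v q \<le> dist u q" "dist v q \<le> dist p q"
    using le[OF vq] in_P by (auto simp: reach_def intro: rtrancl_trans)
  ultimately show "max (dist p u) (dist u v) \<le> dist p v"
    and "max (dist u v) (dist v q) \<le> dist u q"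
    and "max (max (dist p u) (dist u v)) (dist v q) \<le> dist p q"
    by (simp_all add: dist_commute)
qed

theorem corollary1:
  fixes P :: "point set" and T :: "point set set" and p u v q :: point
  assumes "finite P"
    and "is_EMST P T"
    and "{p, u} \<in> T" and "{u, v} \<in> T" and "{v, q} \<in> T"
    and "same_side u v p q"
  shows "angle_deg p u v + angle_deg u v q \<ge> 150"
proof -
  have "p \<noteq> v" "q \<noteq> u"
    using assms(6) by (auto simp: same_side_def orient_def)
  note bounds = EMST_path_dist_bounds[OF assms(1-5) this]
  have "5 * pi / 6 \<le> angle p u v + angle u v q"
    by (rule angle_sum_ge_5pi_div_6_if_diagonals_longest[OF assms(6) bounds])
  then have "5 * pi / 6 * 180 / pi \<le> (angle p u v + angle u v q) * 180 / pi"
    by (intro divide_right_mono mult_right_mono) auto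
  then show ?thesis
    by (simp add: angle_deg_eq add_divide_distrib distrib_right)
qed

end
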